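(* Let $T$ be a $\pi$-increasing tree whose vertex-set contains $1$ and is not equal to $\{1\}$, and let $M$ be its maximum vertex. Then the blocks $\{1\}$ and $\pi^M$ lie in different connected components of $G_M(T)$. In particular, $T$ is reducible.
   Context: Standing assumptions: $r\ge2$ and $\pi$ is a set partition of $\{1,\dots,r\}$ having $\{1\}$ as a block; $\pi^x$ denotes the block containing $x$, and $\mu_i$ the maximum of block $\pi_i$. An unordered increasing tree is a rooted tree on distinct positive integers, sons unordered, each son larger than its father. A $\pi$-increasing tree is an unordered increasing tree $T$ whose vertex-set is a union of blocks of $\pi$ and such that for any two elements $i<j$ of a same block of $\pi$ contained in $V(T)$, $i$ is an ancestor of $j$ in $T$. $v$-decomposition: for a vertex $v$ of $T$ with chain $a_1<\dots<a_\ell=v$ from the root to $v$, removing the chain edges leaves components $T^{(a_j)}$ rooted at $a_j$. $v$-dependence graph $G_v(T)$: directed graph on the blocks of $\pi$ contained in $V(T)$; for each such block $\pi_i$ whose maximum $\mu_i$ is not on the chain $a_1,\dots,a_\ell$, $\mu_i$ is a non-root vertex of a unique $T^{(a_j)}$ and there is an edge (possibly a loop) $\pi_i\to\pi^{a_j}$; no other edges. Connected components are taken ignoring directions. A $\pi$-increasing tree with maximum vertex $M$ is irreducible if $G_M(T)$ is connected, reducible otherwise. *)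

theory Defs
  imports Main "HOL-Library.Disjoint_Sets"
begin

(* An unordered increasing tree on a finite vertex set V with root 'root' is
   represented by its parent map 'par': every non-root vertex v has a father
   par v \<in> V with par v < v. (This determines the tree uniquely.) *)
definition inc_tree :: "nat set \<Rightarrow> nat \<Rightarrow> (nat \<Rightarrow> nat) \<Rightarrow> bool" where
  "inc_tree V root par \<longleftrightarrow> finite V \<and> root \<in> V \<and>
     (\<forall>v \<in> V - {root}. par v \<in> V \<and> par v < v)"

definition tree_edges :: "nat set \<Rightarrow> nat \<Rightarrow> (nat \<Rightarrow> nat) \<Rightarrow> (nat \<times> nat) set" where
  "tree_edges V root par = {(par v, v) | v. v \<in> V - {root}}"

definition ancestor :: "nat set \<Rightarrow> nat \<Rightarrow> (nat \<Rightarrow> nat) \<Rightarrow> nat \<Rightarrow> nat \<Rightarrow> bool" where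
  "ancestor V root par a u \<longleftrightarrow> (a, u) \<in> (tree_edges V root par)\<^sup>+"

definition blk :: "nat set set \<Rightarrow> nat \<Rightarrow> nat set" where
  "blk P x = (THE b. b \<in> P \<and> x \<in> b)"

definition pi_inc_tree :: "nat set set \<Rightarrow> nat set \<Rightarrow> nat \<Rightarrow> (nat \<Rightarrow> nat) \<Rightarrow> bool" where
  "pi_inc_tree P V root par \<longleftrightarrow> inc_tree V root par \<and>
     (\<exists>Q \<subseteq> P. V = \<Union>Q) \<and>
     (\<forall>b \<in> P. b \<subseteq> V \<longrightarrow> (\<forall>i \<in> b. \<forall>j \<in> b. i < j \<longrightarrow> ancestor V root par i j))"

(* the chain a_1 < ... < a_l = v from the root to v *)
definition chain :: "nat set \<Rightarrow> nat \<Rightarrow> (nat \<Rightarrow> nat) \<Rightarrow> nat \<Rightarrow> nat set" where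
  "chain V root par v = {a \<in> V. (a, v) \<in> (tree_edges V root par)\<^sup>*}"

(* root a_j of the component T^(a_j) of the v-decomposition containing u:
   the deepest chain vertex which is an ancestor of (or equal to) u *)
definition comp_root :: "nat set \<Rightarrow> nat \<Rightarrow> (nat \<Rightarrow> nat) \<Rightarrow> nat \<Rightarrow> nat \<Rightarrow> nat" where
  "comp_root V root par v u =
     Max {a \<in> chain V root par v. (a, u) \<in> (tree_edges V root par)\<^sup>*}"

definition dep_nodes :: "nat set set \<Rightarrow> nat set \<Rightarrow> nat set set" where
  "dep_nodes P V = {b \<in> P. b \<subseteq> V}"

definition dep_edges :: "nat set set \<Rightarrow> nat set \<Rightarrow> nat \<Rightarrow> (nat \<Rightarrow> nat) \<Rightarrow> nat \<Rightarrow> (nat set \<times> nat set) set" where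
  "dep_edges P V root par v =
     {(b, blk P (comp_root V root par v (Max b))) | b.
        b \<in> dep_nodes P V \<and> Max b \<notin> chain V root par v}"

definition same_comp :: "('a \<times> 'a) set \<Rightarrow> 'a \<Rightarrow> 'a \<Rightarrow> bool" where
  "same_comp E x y \<longleftrightarrow> (x, y) \<in> (E \<union> E\<inverse>)\<^sup>*"

definition irreducible_tree :: "nat set set \<Rightarrow> nat set \<Rightarrow> nat \<Rightarrow> (nat \<Rightarrow> nat) \<Rightarrow> bool" where
  "irreducible_tree P V root par \<longleftrightarrow>
     (\<forall>b \<in> dep_nodes P V. \<forall>b' \<in> dep_nodes P V.
        same_comp (dep_edges P V root par (Max V)) b b')"

definition reducible_tree :: "nat set set \<Rightarrow> nat set \<Rightarrow> nat \<Rightarrow> (nat \<Rightarrow> nat) \<Rightarrow> bool" where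
  "reducible_tree P V root par \<longleftrightarrow> \<not> irreducible_tree P V root par"

end

theory Submission
  imports Defs
begin

text \<open>
  The maximum \<open>M\<close> lies on the chain from the root to \<open>M\<close>, and so does the root \<open>1\<close>.
  Hence neither \<open>{1}\<close> nor \<open>\<pi>\<^sup>M\<close> (whose maximum is \<open>M\<close>) has an outgoing edge in \<open>G\<^sub>M(T)\<close>,
  while every other block has exactly one. In a graph where every vertex has out-degree
  at most one, following edges forward from any vertex of a connected component leads
  to its unique sink, so two distinct sinks lie in different components.
\<close>

lemma rtrancl_sym_to_sink:
  assumes "single_valued E" and "y \<notin> Domain E" and "(y, x) \<in> (E \<union> E\<inverse>)\<^sup>*"
  shows "(x, y) \<in> E\<^sup>*"
  using assms(3)
proof (induction rule: rtrancl_induct)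
  case base
  then show ?case by simp
next
  case (step x z)
  from step.hyps(2) show ?case
  proof
    assume xz: "(x, z) \<in> E"
    from step.IH show ?thesis
    proof (cases rule: converse_rtranclE)
      case base
      then show ?thesis using xz assms(2) by auto
    next
      case (step u)
      then show ?thesis using xz assms(1) by (auto dest: single_valuedD)
    qed
  next
    assume "(x, z) \<in> E\<inverse>"
    then show ?thesis using step.IH by (auto intro: converse_rtrancl_into_rtrancl)
  qed
qed

lemma same_comp_sinks_eq:
  assumes "single_valued E" and "x \<notin> Domain E" and "y \<notin> Domain E"
    and "same_comp E x y"
  shows "x = y"
proof -
  have "(y, x) \<in> E\<^sup>*"
    using rtrancl_sym_to_sink[OF assms(1,2)] assms(4) unfolding same_comp_def by blast
  then show ?thesis
    using assms(3) by (cases rule: converse_rtranclE) auto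
qed

lemma single_valued_dep_edges: "single_valued (dep_edges P V root par v)"
  unfolding single_valued_def dep_edges_def by auto

lemma chain_block_not_in_Domain_dep_edges:
  assumes "Max b \<in> chain V root par v"
  shows "b \<notin> Domain (dep_edges P V root par v)"
  using assms unfolding dep_edges_def by auto

lemma inc_tree_root_rtrancl:
  assumes "inc_tree V root par" and "v \<in> V"
  shows "(root, v) \<in> (tree_edges V root par)\<^sup>*"
  using assms(2)
proof (induction v rule: less_induct)
  case (less v)
  show ?case
  proof (cases "v = root")
    case False
    with less.prems assms(1) have "par v \<in> V" "par v < v"
      unfolding inc_tree_def by auto
    moreover have "(par v, v) \<in> tree_edges V root par"
      unfolding tree_edges_def using False less.prems by auto
    ultimately show ?thesis using less.IH by (meson rtrancl.rtrancl_into_rtrancl)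
  qed simp
qed

lemma inc_tree_root_le:
  assumes "inc_tree V root par" and "v \<in> V"
  shows "root \<le> v"
  using assms(2)
proof (induction v rule: less_induct)
  case (less v)
  show ?case
  proof (cases "v = root")
    case False
    with less.prems assms(1) have "par v \<in> V" "par v < v"
      unfolding inc_tree_def by auto
    with less.IH show ?thesis by fastforce
  qed simp
qed

lemma root_in_chain:
  assumes "inc_tree V root par" and "v \<in> V"
  shows "root \<in> chain V root par v"
  using assms inc_tree_root_rtrancl unfolding chain_def inc_tree_def by blast

lemma self_in_chain: "v \<in> V \<Longrightarrow> v \<in> chain V root par v"
  unfolding chain_def by simp

lemma blk_eq:
  assumes "partition_on A P" and "b \<in> P" and "x \<in> b"
  shows "blk P x = b"
  unfolding blk_def
proof (rule the_equality)
  fix b' assume "b' \<in> P \<and> x \<in> b'"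
  then show "b' = b"
    using assms disjointD[OF partition_onD2[OF assms(1)], of b' b] by blast
qed (use assms in simp)

lemma Max_block_of_Max:
  assumes "finite V" and "b \<subseteq> V" and "Max V \<in> b"
  shows "Max b = Max V"
  using assms by (intro Max_eqI) (auto intro: finite_subset)

theorem proposition3p8:
  fixes r :: nat and P :: "nat set set" and V :: "nat set" and root :: nat
    and par :: "nat \<Rightarrow> nat"
  assumes "r \<ge> 2"
    and "partition_on {1..r} P"
    and "{1} \<in> P"
    and "pi_inc_tree P V root par"
    and "1 \<in> V"
    and "V \<noteq> {1}"
  shows "\<not> same_comp (dep_edges P V root par (Max V)) {1} (blk P (Max V))
         \<and> reducible_tree P V root par"
proof -
  have tree: "inc_tree V root par" and "\<exists>Q \<subseteq> P. V = \<Union>Q"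
    using assms(4) unfolding pi_inc_tree_def by auto
  then obtain b where b: "b \<in> P" "b \<subseteq> V" "Max V \<in> b"
    using assms(5) Max_in[of V] unfolding inc_tree_def by blast
  have V_pos: "V \<subseteq> {1..r}"
    using \<open>\<exists>Q \<subseteq> P. V = \<Union>Q\<close> partition_onD1[OF assms(2)] by auto
  have "root = 1"
    using inc_tree_root_le[OF tree assms(5)] V_pos tree unfolding inc_tree_def by fastforce
  have "Max V \<noteq> 1"
    using assms(5,6) V_pos tree Max_ge[of V] unfolding inc_tree_def by fastforce
  have blk_Max: "blk P (Max V) = b" and Max_b: "Max b = Max V"
    using blk_eq[OF assms(2) b(1,3)] Max_block_of_Max[OF _ b(2,3)] tree
    by (auto simp: inc_tree_def)
  let ?E = "dep_edges P V root par (Max V)"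
  have "root \<in> chain V root par (Max V)"
    using root_in_chain[OF tree] Max_in tree assms(5) by (auto simp: inc_tree_def)
  then have sink_1: "{1} \<notin> Domain ?E"
    using chain_block_not_in_Domain_dep_edges[of "{1}"] \<open>root = 1\<close> by simp
  have sink_b: "b \<notin> Domain ?E"
    using chain_block_not_in_Domain_dep_edges[of b] self_in_chain[of "Max V" V] Max_b b
    by (metis subsetD)
  have "{1} \<noteq> b"
    using b(3) \<open>Max V \<noteq> 1\<close> by auto
  then have "\<not> same_comp ?E {1} b"
    using same_comp_sinks_eq[OF single_valued_dep_edges sink_1 sink_b] by blast
  moreover have "{1} \<in> dep_nodes P V" "b \<in> dep_nodes P V"
    using assms(3,5) b unfolding dep_nodes_def by auto
  ultimately show ?thesis
    unfolding reducible_tree_def irreducible_tree_def blk_Max by blast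
qed

end
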